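(* Let $\mathcal{X}^{+}$ be any Artin spherical monoid with its classical generators $x_1,\dots,x_n$ (one generator per vertex of the Coxeter graph), and let $a_k$ denote the number of elements of $\mathcal{X}^{+}$ of length $k$. Then the sequence $(a_k)_{k\ge 1}$ has growth rate less than $4$, i.e. $\limsup_{k\to\infty} a_k^{1/k}<4$.
   Context: A Coxeter graph on vertices $x_1,\dots,x_n$ assigns to each pair $i\neq j$ a label $r_{ij}\in\{2,3,4,\dots\}\cup\{\infty\}$ (no edge means $r_{ij}=2$, an unlabeled edge means $r_{ij}=3$). The associated Artin monoid is $\langle x_1,\dots,x_n \mid x_ix_jx_ix_j\cdots = x_jx_ix_jx_i\cdots\ (\text{both sides of length } r_{ij}),\ r_{ij}<\infty\rangle$; since the relations are homogeneous, every element has a well-defined length. An Artin spherical monoid is the Artin monoid of a finite Coxeter graph each of whose connected components is one of: $A_n$ ($n\ge1$, a path $x_1-\cdots-x_n$ with all labels $3$); $B_n$ ($n\ge2$, the same path with the last edge $x_{n-1}x_n$ labeled $4$); $D_n$ ($n\ge4$, a path $x_1-\cdots-x_{n-2}$ with $x_{n-1}$ and $x_n$ both joined to $x_{n-2}$, all labels $3$); $E_n$ ($n=6,7,8$, a path $x_1-x_2-x_3-x_5-x_6-\cdots-x_n$ with $x_4$ joined to $x_3$, all labels $3$); $F_4$ (path $x_1-x_2-x_3-x_4$ with $x_2x_3$ labeled $4$, other labels $3$); $G_2$ (one edge labeled $6$); $H_3$, $H_4$ (paths on $3$, resp. $4$ vertices with the edge $x_1x_2$ labeled $5$ and other labels $3$);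 $I_2(p)$ ($p\ge5$, $p\ne6$, one edge labeled $p$). A sequence $(s_k)$ of positive numbers has growth rate less than $\gamma$ if $\limsup_k \exp(\log(s_k)/k)<\gamma$. *)

theory Defs
  imports Complex_Main "HOL-Library.Extended_Nat" "HOL-Library.Extended_Real"
begin

text \<open>A Coxeter graph on vertices 0,...,n-1 (standing for x_1,...,x_n) is a symmetric
  labelling M i j of pairs of distinct vertices by labels in {2,3,...} union {infinity};
  infinity is the extended natural number \<infinity>.\<close>

definition coxeter_graph :: "nat \<Rightarrow> (nat \<Rightarrow> nat \<Rightarrow> enat) \<Rightarrow> bool" where
  "coxeter_graph n M \<longleftrightarrow>
     (\<forall>i<n. \<forall>j<n. i \<noteq> j \<longrightarrow> M i j = M j i \<and> M i j \<ge> 2)"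

definition cox_adj :: "nat \<Rightarrow> (nat \<Rightarrow> nat \<Rightarrow> enat) \<Rightarrow> nat \<Rightarrow> nat \<Rightarrow> bool" where
  "cox_adj n M i j \<longleftrightarrow> i < n \<and> j < n \<and> i \<noteq> j \<and> M i j \<noteq> 2"

definition cox_component :: "nat \<Rightarrow> (nat \<Rightarrow> nat \<Rightarrow> enat) \<Rightarrow> nat \<Rightarrow> nat set" where
  "cox_component n M i = {j. (cox_adj n M)\<^sup>*\<^sup>* i j}"

text \<open>Standard labelled graphs on vertices 0,...,k-1 (vertex a stands for x_(a+1)).\<close>
definition typeA :: "nat \<Rightarrow> nat \<Rightarrow> enat" where
  "typeA a b = (if a + 1 = b \<or> b + 1 = a then 3 else 2)"

definition typeB :: "nat \<Rightarrow> nat \<Rightarrow> nat \<Rightarrow> enat" where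
  "typeB k a b = (if {a, b} = {k - 2, k - 1} then 4 else typeA a b)"

definition typeD :: "nat \<Rightarrow> nat \<Rightarrow> nat \<Rightarrow> enat" where
  "typeD k a b = (if {a, b} = {k - 3, k - 1} then 3
                  else if {a, b} = {k - 2, k - 1} then 2 else typeA a b)"

definition typeE :: "nat \<Rightarrow> nat \<Rightarrow> enat" where
  "typeE a b = (if {a, b} = {2, 4} then 3 else if {a, b} = {3, 4} then 2 else typeA a b)"

definition typeF :: "nat \<Rightarrow> nat \<Rightarrow> enat" where
  "typeF a b = (if {a, b} = {1, 2} then 4 else typeA a b)"

definition typeH :: "nat \<Rightarrow> nat \<Rightarrow> enat" where
  "typeH a b = (if {a, b} = {0, 1} then 5 else typeA a b)"

definition typeI :: "nat \<Rightarrow> nat \<Rightarrow> nat \<Rightarrow> enat" where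
  "typeI p a b = (if {a, b} = {0, 1} then enat p else 2)"

definition spherical_type :: "nat \<Rightarrow> (nat \<Rightarrow> nat \<Rightarrow> enat) \<Rightarrow> bool" where
  "spherical_type k T \<longleftrightarrow>
       (k \<ge> 1 \<and> T = typeA)
     \<or> (k \<ge> 2 \<and> T = typeB k)
     \<or> (k \<ge> 4 \<and> T = typeD k)
     \<or> (k \<in> {6, 7, 8} \<and> T = typeE)
     \<or> (k = 4 \<and> T = typeF)
     \<or> (k = 2 \<and> T = typeI 6)
     \<or> (k \<in> {3, 4} \<and> T = typeH)
     \<or> (k = 2 \<and> (\<exists>p\<ge>5. p \<noteq> 6 \<and> T = typeI p))"

definition artin_spherical :: "nat \<Rightarrow> (nat \<Rightarrow> nat \<Rightarrow> enat) \<Rightarrow> bool" where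
  "artin_spherical n M \<longleftrightarrow>
     (\<forall>i<n. \<exists>k g T. bij_betw g {0..<k} (cox_component n M i) \<and> spherical_type k T \<and>
        (\<forall>a<k. \<forall>b<k. a \<noteq> b \<longrightarrow> M (g a) (g b) = T a b))"

fun alt_word :: "nat \<Rightarrow> nat \<Rightarrow> nat \<Rightarrow> nat list" where
  "alt_word i j 0 = []"
| "alt_word i j (Suc r) = i # alt_word j i r"

inductive braid_step :: "nat \<Rightarrow> (nat \<Rightarrow> nat \<Rightarrow> enat) \<Rightarrow> nat list \<Rightarrow> nat list \<Rightarrow> bool"
  for n M where
  "\<lbrakk>i < n; j < n; i \<noteq> j; M i j = enat r\<rbrakk> \<Longrightarrow>
     braid_step n M (u @ alt_word i j r @ v) (u @ alt_word j i r @ v)"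

text \<open>The Artin monoid is the set of words over {0..<n} modulo the congruence
  generated by the braid relations.\<close>
definition artin_equiv :: "nat \<Rightarrow> (nat \<Rightarrow> nat \<Rightarrow> enat) \<Rightarrow> (nat list \<times> nat list) set" where
  "artin_equiv n M = {(u, v). equivclp (braid_step n M) u v}"

definition artin_count :: "nat \<Rightarrow> (nat \<Rightarrow> nat \<Rightarrow> enat) \<Rightarrow> nat \<Rightarrow> nat" where
  "artin_count n M k =
     card ({w. set w \<subseteq> {..<n} \<and> length w = k} // artin_equiv n M)"

end

theory Submission
  imports Defs
begin

text \<open>Every element of the Artin monoid is represented by a word in which two adjacent
  commuting letters always appear in increasing order of a fixed rank function, so the number
  of elements of length k is at most the number of such words, i.e. the number of walks of
  length k in a directed graph on the generators. On each spherical component the vertices can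
  be ranked and weighted so that the weight of the successors of every vertex is less than 4
  times its own weight; scaling the components geometrically makes later components
  negligible, and a positive weight vector with ratio c < 4 bounds the walk count by
  a constant times c^k.\<close>

definition rank_ordered :: "(nat \<Rightarrow> nat) \<Rightarrow> (nat \<Rightarrow> nat \<Rightarrow> enat) \<Rightarrow> nat \<Rightarrow> nat \<Rightarrow> bool" where
  "rank_ordered rk M x y \<longleftrightarrow> rk x \<le> rk y \<or> M x y \<noteq> 2"

fun rank_weight :: "(nat \<Rightarrow> nat) \<Rightarrow> nat list \<Rightarrow> nat" where
  "rank_weight rk [] = 0"
| "rank_weight rk (x # w) = rk x * 2 ^ length w + rank_weight rk w"

lemma rank_weight_append:
  "rank_weight rk (u @ v) = rank_weight rk u * 2 ^ length v + rank_weight rk v"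
  by (induction u) (auto simp: algebra_simps power_add)

lemma not_successively_obtain:
  assumes "\<not> successively P w"
  obtains u x y v where "w = u @ x # y # v" and "\<not> P x y"
proof -
  have "\<exists>u x y v. w = u @ x # y # v \<and> \<not> P x y"
    using assms
  proof (induction P w rule: successively.induct)
    case (3 P x y w)
    show ?case
    proof (cases "P x y")
      case True
      with 3 obtain u a b v where "y # w = u @ a # b # v" "\<not> P a b" by auto
      then show ?thesis by (intro exI[of _ "x # u"]) auto
    qed (intro exI[of _ "[]"], auto)
  qed auto
  then show thesis using that by blast
qed

text \<open>Among the words braid equivalent to a given one, a word of least rank weight is rank
  ordered: swapping a commuting pair in the wrong order decreases the rank weight.\<close>
lemma rank_ordered_representative:
  assumes "set w \<subseteq> {..<n}"
  obtains w' where "equivclp (braid_step n M) w w'" and "set w' \<subseteq> {..<n}"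
    and "length w' = length w" and "successively (rank_ordered rk M) w'"
proof -
  let ?S = "\<lambda>w'. equivclp (braid_step n M) w w' \<and> set w' \<subseteq> {..<n} \<and> length w' = length w"
  obtain w0 where w0: "?S w0" and least: "\<And>w'. ?S w' \<Longrightarrow> rank_weight rk w0 \<le> rank_weight rk w'"
    using ex_has_least_nat[of ?S w "rank_weight rk"] assms by auto
  have "successively (rank_ordered rk M) w0"
  proof (rule ccontr)
    assume "\<not> successively (rank_ordered rk M) w0"
    then obtain u x y v where w0_eq: "w0 = u @ x # y # v" and "\<not> rank_ordered rk M x y"
      by (rule not_successively_obtain)
    then have less: "rk y < rk x" and "M x y = enat 2"
      by (auto simp: rank_ordered_def numeral_eq_enat)
    moreover have "x < n" "y < n" "x \<noteq> y" using w0 w0_eq less by auto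
    ultimately have "braid_step n M (u @ alt_word x y 2 @ v) (u @ alt_word y x 2 @ v)"
      by (intro braid_step.intros)
    then have "braid_step n M w0 (u @ y # x # v)"
      by (simp add: w0_eq numeral_2_eq_2)
    then have "?S (u @ y # x # v)"
      using w0 w0_eq by (auto intro: equivclp_into_equivclp)
    moreover have "rank_weight rk (u @ y # x # v) < rank_weight rk w0"
      using less by (simp add: w0_eq rank_weight_append)
    ultimately show False using least by fastforce
  qed
  with w0 that show thesis by blast
qed

lemma artin_count_le_rank_ordered:
  "artin_count n M k \<le> card {w. set w \<subseteq> {..<n} \<and> length w = k \<and> successively (rank_ordered rk M) w}"
    (is "_ \<le> card ?G")
proof -
  let ?E = "artin_equiv n M"
  have fin: "finite ?G"
    by (rule finite_subset[OF _ finite_lists_length_eq[of "{..<n}" k]]) auto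
  have "{w. set w \<subseteq> {..<n} \<and> length w = k} // ?E \<subseteq> (\<lambda>w. ?E `` {w}) ` ?G"
  proof
    fix X assume "X \<in> {w. set w \<subseteq> {..<n} \<and> length w = k} // ?E"
    then obtain x where x: "set x \<subseteq> {..<n}" "length x = k" and X: "X = ?E `` {x}"
      by (auto simp: quotient_def)
    obtain w where w: "equivclp (braid_step n M) x w" "set w \<subseteq> {..<n}" "length w = length x"
      "successively (rank_ordered rk M) w"
      using rank_ordered_representative[OF x(1)] by blast
    from w(1) have "X = ?E `` {w}"
      unfolding X artin_equiv_def by (auto intro: equivclp_trans equivclp_sym)
    with w x show "X \<in> (\<lambda>w. ?E `` {w}) ` ?G" by auto
  qed
  then have "artin_count n M k \<le> card ((\<lambda>w. ?E `` {w}) ` ?G)"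
    unfolding artin_count_def by (intro card_mono finite_imageI fin)
  also have "\<dots> \<le> card ?G" by (rule card_image_le[OF fin])
  finally show ?thesis .
qed

definition walks_from :: "nat \<Rightarrow> (nat \<Rightarrow> nat \<Rightarrow> bool) \<Rightarrow> nat \<Rightarrow> nat \<Rightarrow> nat list set" where
  "walks_from n P k a = {w. set w \<subseteq> {..<n} \<and> length w = Suc k \<and> successively P w \<and> hd w = a}"

lemma finite_walks_from: "finite (walks_from n P k a)"
  by (rule finite_subset[OF _ finite_lists_length_eq[of "{..<n}" "Suc k"]]) (auto simp: walks_from_def)

lemma walks_from_0: "a < n \<Longrightarrow> walks_from n P 0 a = {[a]}"
  by (auto simp: walks_from_def length_Suc_conv)

lemma walks_from_Suc:
  assumes "a < n"
  shows "walks_from n P (Suc k) a = Cons a ` (\<Union>b\<in>{b. b < n \<and> P a b}. walks_from n P k b)"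
proof (intro equalityI subsetI)
  fix w assume "w \<in> walks_from n P (Suc k) a"
  then obtain b w' where "w = a # b # w'" and "b # w' \<in> walks_from n P k b" "b < n" "P a b"
    by (auto simp: walks_from_def length_Suc_conv)
  then show "w \<in> Cons a ` (\<Union>b\<in>{b. b < n \<and> P a b}. walks_from n P k b)" by blast
next
  fix w assume "w \<in> Cons a ` (\<Union>b\<in>{b. b < n \<and> P a b}. walks_from n P k b)"
  then obtain b w' where "w = a # w'" "b < n" "P a b" "w' \<in> walks_from n P k b" by blast
  with assms show "w \<in> walks_from n P (Suc k) a"
    by (auto simp: walks_from_def length_Suc_conv)
qed

lemma card_walks_from_le:
  fixes W :: "nat \<Rightarrow> real"
  assumes lo: "\<And>v. v < n \<Longrightarrow> lo \<le> W v"
    and sub: "\<And>v. v < n \<Longrightarrow> (\<Sum>b | b < n \<and> P v b. W b) \<le> c * W v"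
    and "0 \<le> c" and "a < n"
  shows "lo * card (walks_from n P k a) \<le> c ^ k * W a"
  using \<open>a < n\<close>
proof (induction k arbitrary: a)
  case 0
  then show ?case using lo by (simp add: walks_from_0)
next
  case (Suc k)
  let ?B = "{b. b < n \<and> P a b}"
  have "card (walks_from n P (Suc k) a) = card (\<Union>b\<in>?B. walks_from n P k b)"
    unfolding walks_from_Suc[OF Suc.prems] by (rule card_image) simp
  also have "\<dots> = (\<Sum>b\<in>?B. card (walks_from n P k b))"
    by (rule card_UN_disjoint) (use finite_walks_from in \<open>auto simp: walks_from_def\<close>)
  finally have "lo * card (walks_from n P (Suc k) a) = (\<Sum>b\<in>?B. lo * card (walks_from n P k b))"
    by (simp add: sum_distrib_left)
  also have "\<dots> \<le> (\<Sum>b\<in>?B. c ^ k * W b)"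
    by (rule sum_mono) (use Suc.IH in auto)
  also have "\<dots> = c ^ k * (\<Sum>b\<in>?B. W b)"
    by (simp add: sum_distrib_left)
  also have "\<dots> \<le> c ^ k * (c * W a)"
    using sub[OF Suc.prems] \<open>0 \<le> c\<close> by (intro mult_left_mono) auto
  finally show ?case by (simp add: ac_simps)
qed

lemma card_successively_le_geometric:
  fixes W :: "nat \<Rightarrow> real" and c :: real
  assumes pos: "\<And>v. v < n \<Longrightarrow> 0 < W v"
    and sub: "\<And>v. v < n \<Longrightarrow> (\<Sum>b | b < n \<and> P v b. W b) \<le> c * W v"
    and "0 < c"
  obtains K where "0 < K"
    and "\<And>k. 0 < k \<Longrightarrow> card {w. set w \<subseteq> {..<n} \<and> length w = k \<and> successively P w} \<le> K * c ^ k"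
proof -
  define lo where "lo = Min (insert 1 (W ` {..<n}))"
  have lo: "0 < lo" using pos by (auto simp: lo_def)
  have lo_le: "lo \<le> W v" if "v < n" for v using that by (auto simp: lo_def)
  define K where "K = (\<Sum>a<n. W a) / (lo * c) + 1"
  have "0 \<le> (\<Sum>a<n. W a)" using pos by (intro sum_nonneg) (simp add: less_imp_le)
  then have "0 < K" using lo \<open>0 < c\<close> by (simp add: K_def add_nonneg_pos)
  moreover have "card {w. set w \<subseteq> {..<n} \<and> length w = k \<and> successively P w} \<le> K * c ^ k"
    if "0 < k" for k
  proof -
    obtain j where k: "k = Suc j" using \<open>0 < k\<close> gr0_implies_Suc by blast
    have "{w. set w \<subseteq> {..<n} \<and> length w = k \<and> successively P w} = (\<Union>a<n. walks_from n P j a)"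
      by (auto simp: k walks_from_def length_Suc_conv)
    then have "lo * card {w. set w \<subseteq> {..<n} \<and> length w = k \<and> successively P w}
        \<le> lo * (\<Sum>a<n. card (walks_from n P j a))"
      using lo by (simp del: of_nat_sum add: of_nat_sum[symmetric] card_UN_le)
    also have "\<dots> \<le> (\<Sum>a<n. c ^ j * W a)"
      unfolding of_nat_sum sum_distrib_left using card_walks_from_le[OF lo_le sub] \<open>0 < c\<close>
      by (intro sum_mono) (simp add: less_imp_le)
    also have "\<dots> = (K - 1) * lo * c ^ k"
      using lo \<open>0 < c\<close> by (simp add: K_def k sum_distrib_right[symmetric] field_simps)
    also have "\<dots> \<le> lo * (K * c ^ k)"
      using lo \<open>0 < c\<close> by (simp add: algebra_simps)
    finally show ?thesis using lo by simp
  qed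
  ultimately show thesis by (rule that)
qed

lemma limsup_root_less_of_le_geometric:
  fixes a :: "nat \<Rightarrow> real"
  assumes bound: "\<And>k. 0 < k \<Longrightarrow> a k \<le> K * c ^ k" and "0 < K" "0 < c" "c < b"
  shows "limsup (\<lambda>k. ereal (root k (a k))) < ereal b"
proof -
  define d where "d = (c + b) / 2"
  have "(\<lambda>k. root k K) \<longlonglongrightarrow> 1" by (rule LIMSEQ_root_const[OF \<open>0 < K\<close>])
  moreover have "1 < d / c" using assms by (simp add: d_def field_simps)
  ultimately have "eventually (\<lambda>k. root k K < d / c) sequentially"
    by (rule order_tendstoD)
  then have "eventually (\<lambda>k. ereal (root k (a k)) \<le> ereal d) sequentially"
    using eventually_gt_at_top[of 0]
  proof eventually_elim
    case (elim k)
    have "root k (a k) \<le> root k (K * c ^ k)"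
      using bound[OF elim(2)] elim(2) by (simp add: real_root_le_iff)
    also have "\<dots> = root k K * c"
      using elim(2) \<open>0 < c\<close> by (simp add: real_root_mult real_root_power_cancel)
    also have "\<dots> \<le> d"
      using elim(1) \<open>0 < c\<close> by (simp add: pos_less_divide_eq less_imp_le)
    finally show ?case by simp
  qed
  then have "limsup (\<lambda>k. ereal (root k (a k))) \<le> ereal d"
    by (rule Limsup_bounded)
  also have "ereal d < ereal b" using assms by (simp add: d_def)
  finally show ?thesis .
qed

text \<open>For a graph T on 0,...,k-1 ranked by the vertex order, the letters that may follow x in
  a rank ordered word are the a \<ge> x and the neighbours of x.\<close>
definition forward_weight :: "nat \<Rightarrow> (nat \<Rightarrow> nat \<Rightarrow> enat) \<Rightarrow> (nat \<Rightarrow> real) \<Rightarrow> nat \<Rightarrow> real" where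
  "forward_weight k T w x = (\<Sum>a | a < k \<and> (x \<le> a \<or> T x a \<noteq> 2). w a)"

definition subcritical_weights :: "nat \<Rightarrow> (nat \<Rightarrow> nat \<Rightarrow> enat) \<Rightarrow> (nat \<Rightarrow> real) \<Rightarrow> bool" where
  "subcritical_weights k T w \<longleftrightarrow> (\<forall>a<k. 0 < w a) \<and> (\<forall>x<k. forward_weight k T w x < 4 * w x)"

lemma sum_linear_div_pow2:
  fixes N :: real
  shows "(\<Sum>a\<in>{x..<x + j}. (N - a) / 2 ^ a) = 2 * (N - x - 1) / 2 ^ x - 2 * (N - x - j - 1) / 2 ^ (x + j)"
proof (induction j)
  case (Suc j)
  have "(\<Sum>a\<in>{x..<x + Suc j}. (N - a) / 2 ^ a)
      = (\<Sum>a\<in>{x..<x + j}. (N - a) / 2 ^ a) + (N - (x + j)) / 2 ^ (x + j)"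
    by simp
  also have "\<dots> = 2 * (N - x - 1) / 2 ^ x - 2 * (N - x - j - 1) / 2 ^ (x + j) + (N - (x + j)) / 2 ^ (x + j)"
    using Suc by simp
  also have "\<dots> = 2 * (N - x - 1) / 2 ^ x - 2 * (N - x - Suc j - 1) / 2 ^ (x + Suc j)"
    by (simp add: field_simps)
  finally show ?case .
qed simp

text \<open>With v a = (N - a) / 2^a one has v (x - 1) + \<Sum>a\<ge>x. v a = 4 v x up to a boundary term
  at k, so on a path these weights have Perron ratio just below 4.\<close>
lemma path_forward_sum_le:
  fixes N :: real
  assumes "x < k" and "0 \<le> N"
  shows "(\<Sum>a | a < k \<and> (x \<le> a \<or> Suc a = x). (N - a) / 2 ^ a)
    \<le> 4 * ((N - x) / 2 ^ x) - 2 * (N - k - 1) / 2 ^ k"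
proof -
  have tail: "(\<Sum>a\<in>{x..<k}. (N - a) / 2 ^ a) = 2 * (N - x - 1) / 2 ^ x - 2 * (N - k - 1) / 2 ^ k"
    using sum_linear_div_pow2[of N x "k - x"] assms by (simp add: of_nat_diff)
  show ?thesis
  proof (cases x)
    case 0
    then have "{a. a < k \<and> (x \<le> a \<or> Suc a = x)} = {x..<k}" by auto
    then show ?thesis using tail 0 assms by simp
  next
    case (Suc y)
    then have "{a. a < k \<and> (x \<le> a \<or> Suc a = x)} = insert y {x..<k}" using assms by auto
    then have "(\<Sum>a | a < k \<and> (x \<le> a \<or> Suc a = x). (N - a) / 2 ^ a)
        = (N - y) / 2 ^ y + 2 * (N - x - 1) / 2 ^ x - 2 * (N - k - 1) / 2 ^ k"
      using tail Suc by simp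
    also have "(N - y) / 2 ^ y + 2 * (N - x - 1) / 2 ^ x = 4 * ((N - x) / 2 ^ x)"
      using Suc by (simp add: field_simps)
    finally show ?thesis by simp
  qed
qed

lemma subcritical_weights_path:
  assumes "\<And>x a. x < k \<Longrightarrow> a < x \<Longrightarrow> T x a \<noteq> 2 \<longleftrightarrow> Suc a = x"
  shows "\<exists>w. subcritical_weights k T w"
proof
  define N where "N = real k + 2"
  show "subcritical_weights k T (\<lambda>a. (N - a) / 2 ^ a)"
    unfolding subcritical_weights_def
  proof (intro conjI allI impI)
    fix x assume x: "x < k"
    have "{a. a < k \<and> (x \<le> a \<or> T x a \<noteq> 2)} = {a. a < k \<and> (x \<le> a \<or> Suc a = x)}"
      using assms[OF x] not_le by blast
    then have "forward_weight k T (\<lambda>a. (N - a) / 2 ^ a) x \<le> 4 * ((N - x) / 2 ^ x) - 2 / 2 ^ k"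
      using path_forward_sum_le[OF x, of N] by (simp add: forward_weight_def N_def)
    also have "\<dots> < 4 * ((N - x) / 2 ^ x)" by simp
    finally show "forward_weight k T (\<lambda>a. (N - a) / 2 ^ a) x < 4 * ((N - x) / 2 ^ x)" .
  qed (simp add: N_def)
qed

lemma typeD_adjacent_below:
  assumes "4 \<le> k" "a < x" "x < k"
  shows "typeD k x a \<noteq> 2 \<longleftrightarrow> (if x = k - 1 then a = k - 3 else Suc a = x)"
  using assms by (auto simp: typeD_def typeA_def doubleton_eq_iff numeral_eq_enat)

text \<open>The path weights on x_1 ... x_(k-1), with the weight of the branch vertex x_k raised
  from 16/2^k to 27/2^k so that the inequality also holds at x_k.\<close>
lemma subcritical_weights_typeD:
  assumes k: "4 \<le> k"
  shows "\<exists>w. subcritical_weights k (typeD k) w"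
proof
  define N where "N = real k + 7"
  define v where "v a = (N - a) / 2 ^ a" for a :: nat
  define w where "w a = (if a = k - 1 then 27 / 2 ^ k else v a)" for a
  have pow: "(2::real) ^ k = 2 ^ (k - j) * 2 ^ j" if "j \<le> k" for j
    using that by (simp flip: power_add)
  show "subcritical_weights k (typeD k) w"
    unfolding subcritical_weights_def
  proof (intro conjI allI impI)
    fix x assume x: "x < k"
    let ?S = "{a. a < k \<and> (x \<le> a \<or> typeD k x a \<noteq> 2)}"
    show "forward_weight k (typeD k) w x < 4 * w x"
    proof (cases "x = k - 1")
      case True
      have below: "typeD k x a \<noteq> 2 \<longleftrightarrow> a = k - 3" if "a < x" for a
        using typeD_adjacent_below[OF k that x] True by simp
      have "?S = {k - 3, k - 1}"
      proof (intro equalityI subsetI)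
        fix a assume "a \<in> ?S"
        then show "a \<in> {k - 3, k - 1}" using below[of a] True by (cases "x \<le> a") auto
      next
        fix a assume "a \<in> {k - 3, k - 1}"
        then show "a \<in> ?S" using below[of "k - 3"] True k by auto
      qed
      moreover have "v (k - 3) = 80 / 2 ^ k"
        using pow[of 3] k by (simp add: v_def N_def of_nat_diff)
      ultimately show ?thesis using k True by (simp add: forward_weight_def w_def divide_strict_right_mono)
    next
      case False
      have "typeD k x a \<noteq> 2 \<longleftrightarrow> Suc a = x" if "a < x" for a
        using typeD_adjacent_below[OF k that x] False by simp
      then have S: "?S = {a. a < k \<and> (x \<le> a \<or> Suc a = x)}"
        using not_le by blast
      have last: "k - 1 \<in> ?S" using x by auto
      have "forward_weight k (typeD k) w x = 27 / 2 ^ k + sum v (?S - {k - 1})"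
        unfolding forward_weight_def using last by (simp add: sum.remove w_def)
      also have "\<dots> = 27 / 2 ^ k - v (k - 1) + sum v ?S"
        using last by (simp add: sum.remove)
      also have "v (k - 1) = 16 / 2 ^ k"
        using pow[of 1] k by (simp add: v_def N_def of_nat_diff)
      also have "sum v ?S \<le> 4 * v x - 12 / 2 ^ k"
        using path_forward_sum_le[OF x, of N] unfolding S by (simp add: v_def N_def)
      finally have "forward_weight k (typeD k) w x \<le> 4 * v x - 1 / 2 ^ k" by simp
      moreover have "(0::real) < 1 / 2 ^ k" by simp
      moreover have "w x = v x" using False by (simp add: w_def)
      ultimately show ?thesis by linarith
    qed
  qed (simp add: w_def v_def N_def)
qed

definition weights_check :: "nat \<Rightarrow> (nat \<Rightarrow> nat \<Rightarrow> enat) \<Rightarrow> nat list \<Rightarrow> bool" where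
  "weights_check k T ws \<longleftrightarrow> (\<forall>x\<in>set [0..<k]. 0 < ws ! x \<and>
     sum_list (map (\<lambda>a. if x \<le> a \<or> T x a \<noteq> 2 then ws ! a else 0) [0..<k]) < 4 * ws ! x)"

lemma subcritical_weights_if_check:
  assumes "weights_check k T ws"
  shows "subcritical_weights k T (\<lambda>a. real (ws ! a))"
  unfolding subcritical_weights_def
proof (intro conjI allI impI)
  fix x assume x: "x < k"
  then have "(\<Sum>a<k. if x \<le> a \<or> T x a \<noteq> 2 then ws ! a else 0) < 4 * ws ! x"
    using assms by (simp add: weights_check_def sum_list_distinct_conv_sum_set atLeast0LessThan)
  then have "real (\<Sum>a<k. if x \<le> a \<or> T x a \<noteq> 2 then ws ! a else 0) < real (4 * ws ! x)"
    by linarith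
  then have "(\<Sum>a<k. if x \<le> a \<or> T x a \<noteq> 2 then real (ws ! a) else 0) < 4 * real (ws ! x)"
    by (simp add: of_nat_sum if_distrib cong: if_cong)
  moreover have "{a. a < k \<and> (x \<le> a \<or> T x a \<noteq> 2)} = {..<k} \<inter> {a. x \<le> a \<or> T x a \<noteq> 2}" by auto
  ultimately show "forward_weight k T (\<lambda>a. real (ws ! a)) x < 4 * real (ws ! x)"
    by (simp add: forward_weight_def sum.inter_restrict)
qed (use assms in \<open>simp add: weights_check_def\<close>)

lemma subcritical_weights_typeE:
  assumes "k \<in> {6, 7, 8}"
  shows "\<exists>w. subcritical_weights k typeE w"
proof -
  have "weights_check 6 typeE [1000, 1000, 724, 447, 324, 124]"
    and "weights_check 7 typeE [1000, 1000, 732, 464, 340, 144, 53]"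
    and "weights_check 8 typeE [1000, 1000, 737, 474, 349, 155, 64, 23]"
    by code_simp+
  with assms show ?thesis by (auto dest: subcritical_weights_if_check)
qed

lemma subcritical_weights_spherical:
  assumes "spherical_type k T"
  shows "\<exists>w. subcritical_weights k T w"
  using assms unfolding spherical_type_def
proof (elim disjE conjE exE)
  assume "4 \<le> k" "T = typeD k"
  then show ?thesis by (simp add: subcritical_weights_typeD)
next
  assume "k \<in> {6, 7, 8}" "T = typeE"
  then show ?thesis by (simp add: subcritical_weights_typeE)
qed (intro subcritical_weights_path;
     auto simp: typeA_def typeB_def typeF_def typeH_def typeI_def numeral_eq_enat doubleton_eq_iff
          less_Suc_eq)+

context
  fixes n :: nat and M :: "nat \<Rightarrow> nat \<Rightarrow> enat"
  assumes cg: "coxeter_graph n M"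
begin

lemma equivp_rtranclp_cox_adj: "equivp (cox_adj n M)\<^sup>*\<^sup>*"
  by (rule equivp_rtranclp, rule sympI) (use cg in \<open>auto simp: cox_adj_def coxeter_graph_def\<close>)

lemma cox_component_eq_iff: "cox_component n M i = cox_component n M j \<longleftrightarrow> j \<in> cox_component n M i"
proof -
  have "(cox_adj n M)\<^sup>*\<^sup>* i j = ((cox_adj n M)\<^sup>*\<^sup>* i = (cox_adj n M)\<^sup>*\<^sup>* j)"
    using equivp_rtranclp_cox_adj by (simp only: equivp_def)
  then show ?thesis by (simp add: cox_component_def set_eq_iff fun_eq_iff)
qed

lemma cox_component_subset: "i < n \<Longrightarrow> cox_component n M i \<subseteq> {..<n}"
proof
  fix j assume "i < n" and "j \<in> cox_component n M i"
  then have "(cox_adj n M)\<^sup>*\<^sup>* i j" by (simp add: cox_component_def)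
  then show "j \<in> {..<n}" using \<open>i < n\<close>
    by (induction rule: rtranclp_induct) (auto simp: cox_adj_def)
qed

lemma mem_cox_component_if_label:
  "i < n \<Longrightarrow> j < n \<Longrightarrow> i \<noteq> j \<Longrightarrow> M i j \<noteq> 2 \<Longrightarrow> j \<in> cox_component n M i"
  by (simp add: cox_component_def cox_adj_def r_into_rtranclp)

lemma Min_cox_component_in:
  assumes "i < n"
  shows "Min (cox_component n M i) \<in> cox_component n M i"
proof (rule Min_in)
  show "finite (cox_component n M i)"
    using cox_component_subset[OF assms] by (rule finite_subset) simp
qed (auto simp: cox_component_def)

lemma Min_cox_component_eq_iff:
  assumes "i < n" "j < n"
  shows "Min (cox_component n M j) = Min (cox_component n M i) \<longleftrightarrow> j \<in> cox_component n M i"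
proof
  assume "Min (cox_component n M j) = Min (cox_component n M i)"
  then have "cox_component n M i = cox_component n M j"
    using Min_cox_component_in[OF assms(1)] Min_cox_component_in[OF assms(2)]
    by (metis cox_component_eq_iff)
  then show "j \<in> cox_component n M i" by (simp add: cox_component_eq_iff)
qed (simp add: cox_component_eq_iff[symmetric])

end

lemma forward_weight_bij_betw:
  assumes g: "bij_betw g {0..<k} C" and "x < k"
  shows "(\<Sum>b | b \<in> C \<and> (x \<le> inv_into {0..<k} g b \<or> M (g x) b \<noteq> 2). u (inv_into {0..<k} g b))
    = forward_weight k (\<lambda>x a. M (g x) (g a)) u x"
proof -
  let ?h = "inv_into {0..<k} g"
  let ?Q = "\<lambda>a. x \<le> a \<or> M (g x) (g a) \<noteq> 2"
  have fin: "finite C" using bij_betw_finite[OF g] by simp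
  have "{b. b \<in> C \<and> (x \<le> ?h b \<or> M (g x) b \<noteq> 2)} = {b \<in> C. ?Q (?h b)}"
    using g by (auto simp: bij_betw_def f_inv_into_f)
  then have "(\<Sum>b | b \<in> C \<and> (x \<le> ?h b \<or> M (g x) b \<noteq> 2). u (?h b))
      = (\<Sum>b\<in>C. if ?Q (?h b) then u (?h b) else 0)"
    by (simp add: sum.inter_filter[OF fin])
  also have "\<dots> = (\<Sum>a\<in>{0..<k}. if ?Q a then u a else 0)"
    by (rule sum.reindex_bij_betw[OF bij_betw_inv_into[OF g]])
  also have "\<dots> = forward_weight k (\<lambda>x a. M (g x) (g a)) u x"
    using sum.inter_filter[of "{..<k}" u ?Q] by (simp add: forward_weight_def atLeast0LessThan)
  finally show ?thesis .
qed

lemma component_subcritical_weights: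
  assumes "artin_spherical n M" and "c < n"
  obtains k g u where "bij_betw g {0..<k} (cox_component n M c)"
    and "subcritical_weights k (\<lambda>x a. M (g x) (g a)) u"
proof -
  obtain k g T where g: "bij_betw g {0..<k} (cox_component n M c)" and "spherical_type k T"
    and labels: "\<And>a b. a < k \<Longrightarrow> b < k \<Longrightarrow> a \<noteq> b \<Longrightarrow> M (g a) (g b) = T a b"
    using assms unfolding artin_spherical_def by blast
  then obtain u where u: "subcritical_weights k T u"
    using subcritical_weights_spherical by blast
  have "forward_weight k (\<lambda>x a. M (g x) (g a)) u x = forward_weight k T u x" if "x < k" for x
  proof -
    have "{a. a < k \<and> (x \<le> a \<or> M (g x) (g a) \<noteq> 2)} = {a. a < k \<and> (x \<le> a \<or> T x a \<noteq> 2)}"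
      using labels[OF that] by force
    then show ?thesis by (simp add: forward_weight_def)
  qed
  with u have "subcritical_weights k (\<lambda>x a. M (g x) (g a)) u"
    by (simp add: subcritical_weights_def)
  with g show thesis by (rule that)
qed

lemma spherical_component_labellings:
  assumes cg: "coxeter_graph n M" and sph: "artin_spherical n M"
  obtains G :: "nat \<Rightarrow> nat \<Rightarrow> nat" and K :: "nat \<Rightarrow> nat" and U :: "nat \<Rightarrow> nat \<Rightarrow> real" where
    "\<And>v. v < n \<Longrightarrow> bij_betw (G (Min (cox_component n M v))) {0..<K (Min (cox_component n M v))}
       (cox_component n M v)"
    and "\<And>v. v < n \<Longrightarrow> subcritical_weights (K (Min (cox_component n M v)))
       (\<lambda>x a. M (G (Min (cox_component n M v)) x) (G (Min (cox_component n M v)) a))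
       (U (Min (cox_component n M v)))"
proof -
  let ?C = "cox_component n M"
  have "\<forall>c. \<exists>k g u. c < n \<longrightarrow> bij_betw g {0..<k} (?C c)
      \<and> subcritical_weights k (\<lambda>x a. M (g x) (g a)) u"
    using component_subcritical_weights[OF sph] by metis
  then obtain K G U where KGU: "\<And>c. c < n \<Longrightarrow> bij_betw (G c) {0..<K c} (?C c)
      \<and> subcritical_weights (K c) (\<lambda>x a. M (G c x) (G c a)) (U c)"
    by metis
  have "bij_betw (G (Min (?C v))) {0..<K (Min (?C v))} (?C v)
      \<and> subcritical_weights (K (Min (?C v))) (\<lambda>x a. M (G (Min (?C v)) x) (G (Min (?C v)) a)) (U (Min (?C v)))"
    if "v < n" for v
  proof -
    have "Min (?C v) < n" "?C (Min (?C v)) = ?C v"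
      using Min_cox_component_in[OF cg that] cox_component_subset[OF cg that]
        cox_component_eq_iff[OF cg, of v] by auto
    then show ?thesis using KGU[of "Min (?C v)"] by simp
  qed
  then show thesis by (intro that[of G K U]) blast+
qed

text \<open>cls v is the least vertex of the component of v, and loc v the position of v in
  a standard labelling of that component.\<close>
lemma spherical_local_weights:
  assumes cg: "coxeter_graph n M" and sph: "artin_spherical n M"
  obtains cls loc :: "nat \<Rightarrow> nat" and w :: "nat \<Rightarrow> real" where
    "\<And>v b. v < n \<Longrightarrow> b < n \<Longrightarrow> cls b \<noteq> cls v \<Longrightarrow> M v b = 2"
    and "\<And>v. v < n \<Longrightarrow> loc v < n" and "\<And>v. v < n \<Longrightarrow> 0 < w v"
    and "\<And>v. v < n \<Longrightarrow> (\<Sum>b | b < n \<and> cls b = cls v \<and> (loc v \<le> loc b \<or> M v b \<noteq> 2). w b) < 4 * w v"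
proof -
  let ?C = "cox_component n M"
  obtain G K U where
    bij: "\<And>v. v < n \<Longrightarrow> bij_betw (G (Min (?C v))) {0..<K (Min (?C v))} (?C v)"
    and sub: "\<And>v. v < n \<Longrightarrow> subcritical_weights (K (Min (?C v)))
      (\<lambda>x a. M (G (Min (?C v)) x) (G (Min (?C v)) a)) (U (Min (?C v)))"
    by (rule spherical_component_labellings[OF cg sph]) (assumption | rule that)+
  define cls where "cls v = Min (?C v)" for v
  note bij = bij[folded cls_def] and sub = sub[folded cls_def]
  define loc where "loc v = inv_into {0..<K (cls v)} (G (cls v)) v" for v
  define w where "w v = U (cls v) (loc v)" for v
  have same_cls: "cls b = cls v \<longleftrightarrow> b \<in> ?C v" if "v < n" "b < n" for v b
    using Min_cox_component_eq_iff[OF cg that] by (simp add: cls_def)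
  have loc: "loc v < K (cls v)" "G (cls v) (loc v) = v" if "v < n" for v
  proof -
    have v_img: "v \<in> G (cls v) ` {0..<K (cls v)}"
      using bij[OF that] by (auto simp: bij_betw_def cox_component_def)
    show "loc v < K (cls v)" using inv_into_into[OF v_img] by (simp add: loc_def)
    show "G (cls v) (loc v) = v" using f_inv_into_f[OF v_img] by (simp add: loc_def)
  qed
  show thesis
  proof
    fix v b assume "v < n" "b < n" "cls b \<noteq> cls v"
    then show "M v b = 2"
      using same_cls mem_cox_component_if_label[OF cg] by blast
  next
    fix v assume v: "v < n"
    have "K (cls v) \<le> n"
      using bij_betw_same_card[OF bij[OF v]] card_mono[OF _ cox_component_subset[OF cg v]] by simp
    then show "loc v < n" using loc(1)[OF v] by simp
    show "0 < w v" using sub[OF v] loc(1)[OF v] by (simp add: w_def subcritical_weights_def)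
  next
    fix v assume v: "v < n"
    let ?h = "inv_into {0..<K (cls v)} (G (cls v))"
    have loc_b: "loc b = ?h b" and w_b: "w b = U (cls v) (?h b)" if "b \<in> ?C v" for b
    proof -
      have "cls b = cls v" using that same_cls[OF v] cox_component_subset[OF cg v] by blast
      then show "loc b = ?h b" and "w b = U (cls v) (?h b)" by (simp_all add: w_def loc_def)
    qed
    have "{b. b < n \<and> cls b = cls v \<and> (loc v \<le> loc b \<or> M v b \<noteq> 2)}
        = {b. b \<in> ?C v \<and> (loc v \<le> ?h b \<or> M (G (cls v) (loc v)) b \<noteq> 2)}"
      using same_cls[OF v] cox_component_subset[OF cg v] loc(2)[OF v] loc_b by auto
    then have "(\<Sum>b | b < n \<and> cls b = cls v \<and> (loc v \<le> loc b \<or> M v b \<noteq> 2). w b)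
        = (\<Sum>b | b \<in> ?C v \<and> (loc v \<le> ?h b \<or> M (G (cls v) (loc v)) b \<noteq> 2). U (cls v) (?h b))"
      by (auto intro!: sum.cong simp: w_b)
    also have "\<dots> = forward_weight (K (cls v)) (\<lambda>x a. M (G (cls v) x) (G (cls v) a)) (U (cls v)) (loc v)"
      by (rule forward_weight_bij_betw[OF bij[OF v] loc(1)[OF v]])
    also have "\<dots> < 4 * w v"
      using sub[OF v] loc(1)[OF v] by (simp add: w_def subcritical_weights_def)
    finally show "(\<Sum>b | b < n \<and> cls b = cls v \<and> (loc v \<le> loc b \<or> M v b \<noteq> 2). w b) < 4 * w v" .
  qed
qed

lemma lex_rank_less:
  fixes c c' l l' n :: nat
  assumes "l' < n" and "c' < c"
  shows "c' * n + l' < c * n + l"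
proof -
  have "c' * n + l' < Suc c' * n" using assms(1) by simp
  also have "\<dots> \<le> c * n" using assms(2) by (intro mult_right_mono) auto
  finally show ?thesis by simp
qed

text \<open>Scaling the weights of the component with index c by ep^c makes the contribution of later
  components to a forward sum negligible, so the local strict inequalities survive.\<close>
lemma glue_subcritical_weights:
  fixes cls loc :: "nat \<Rightarrow> nat" and w :: "nat \<Rightarrow> real"
  assumes sep: "\<And>v b. v < n \<Longrightarrow> b < n \<Longrightarrow> cls b \<noteq> cls v \<Longrightarrow> M v b = 2"
    and loc: "\<And>v. v < n \<Longrightarrow> loc v < n" and pos: "\<And>v. v < n \<Longrightarrow> 0 < w v"
    and forward: "\<And>v. v < n \<Longrightarrow>
      (\<Sum>b | b < n \<and> cls b = cls v \<and> (loc v \<le> loc b \<or> M v b \<noteq> 2). w b) < 4 * w v"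
  obtains W :: "nat \<Rightarrow> real" where "\<And>v. v < n \<Longrightarrow> 0 < W v"
    and "\<And>v. v < n \<Longrightarrow> (\<Sum>b | b < n \<and> rank_ordered (\<lambda>v. cls v * n + loc v) M v b. W b) < 4 * W v"
proof -
  let ?rk = "\<lambda>v. cls v * n + loc v"
  define L where "L v = (\<Sum>b | b < n \<and> cls b = cls v \<and> (loc v \<le> loc b \<or> M v b \<noteq> 2). w b)" for v
  define hi where "hi = Max (insert 1 (w ` {..<n}))"
  define gap where "gap = Min (insert 1 ((\<lambda>v. 4 * w v - L v) ` {..<n}))"
  define ep where "ep = min 1 (gap / (real n * hi + 1))"
  define W where "W v = ep ^ cls v * w v" for v
  have hi: "1 \<le> hi" "\<And>v. v < n \<Longrightarrow> w v \<le> hi" by (auto simp: hi_def)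
  have gap: "0 < gap" "\<And>v. v < n \<Longrightarrow> gap \<le> 4 * w v - L v"
    using forward by (auto simp: gap_def L_def)
  have denom: "0 < real n * hi + 1" using hi by (simp add: add_nonneg_pos)
  then have ep: "0 < ep" "ep \<le> 1" using gap by (auto simp: ep_def)
  have "real n * hi * ep \<le> real n * hi * (gap / (real n * hi + 1))"
    using hi by (intro mult_left_mono) (auto simp: ep_def)
  also have "\<dots> < gap"
    using gap(1) denom by (simp add: pos_divide_less_eq)
  finally have small: "real n * hi * ep < gap" .
  have W_pos: "0 < W v" if "v < n" for v
    using pos[OF that] ep by (simp add: W_def)
  have W_sub: "(\<Sum>b | b < n \<and> rank_ordered ?rk M v b. W b) < 4 * W v" if v: "v < n" for v
  proof -
    let ?B = "{b. b < n \<and> rank_ordered ?rk M v b}"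
    let ?S = "{b. cls b = cls v}"
    have "?B \<inter> ?S = {b. b < n \<and> cls b = cls v \<and> (loc v \<le> loc b \<or> M v b \<noteq> 2)}"
      by (auto simp: rank_ordered_def)
    then have inner: "sum W (?B \<inter> ?S) = ep ^ cls v * L v"
      by (simp add: L_def W_def sum_distrib_left)
    have "W b \<le> ep ^ Suc (cls v) * hi" if "b \<in> ?B - ?S" for b
    proof -
      from that have b: "b < n" "cls b \<noteq> cls v" "rank_ordered ?rk M v b" by auto
      then have "?rk v \<le> ?rk b" using sep[OF v] by (auto simp: rank_ordered_def)
      with b(2) lex_rank_less[OF loc[OF b(1)], where c' = "cls b" and c = "cls v" and l = "loc v"]
      have "cls v < cls b" by fastforce
      then have "ep ^ cls b \<le> ep ^ Suc (cls v)" using ep by (intro power_decreasing) auto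
      then show ?thesis
        using hi(2)[OF b(1)] pos[OF b(1)] ep by (auto simp: W_def intro: mult_mono)
    qed
    then have "sum W (?B - ?S) \<le> real (card (?B - ?S)) * (ep ^ Suc (cls v) * hi)"
      using sum_bounded_above[of "?B - ?S" W] by simp
    also have "\<dots> \<le> real n * (ep ^ Suc (cls v) * hi)"
      using card_mono[of "{..<n}" "?B - ?S"] ep hi by (intro mult_right_mono) auto
    finally have outer: "sum W (?B - ?S) \<le> ep ^ cls v * (real n * hi * ep)"
      by (simp add: ac_simps)
    have "sum W ?B = sum W (?B \<inter> ?S) + sum W (?B - ?S)"
      by (rule sum.Int_Diff) simp
    also have "\<dots> \<le> ep ^ cls v * (L v + real n * hi * ep)"
      using inner outer by (simp add: distrib_left)
    also have "\<dots> < ep ^ cls v * (4 * w v)"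
      using small gap(2)[OF v] ep by (intro mult_strict_left_mono) auto
    finally show ?thesis by (simp add: W_def)
  qed
  from W_pos W_sub show thesis by (rule that)
qed

lemma uniform_ratio_below:
  fixes f g :: "nat \<Rightarrow> real"
  assumes "\<And>v. v < n \<Longrightarrow> 0 < g v" and "\<And>v. v < n \<Longrightarrow> f v < b * g v" and "0 < b"
  obtains c :: real where "0 < c" and "c < b" and "\<And>v. v < n \<Longrightarrow> f v \<le> c * g v"
proof
  define c where "c = Max (insert (b / 2) ((\<lambda>v. f v / g v) ` {..<n}))"
  have "b / 2 \<le> c" unfolding c_def by (rule Max_ge) auto
  then show "0 < c" using \<open>0 < b\<close> by linarith
  show "c < b"
    using assms by (auto simp: c_def divide_less_eq)
  show "f v \<le> c * g v" if "v < n" for v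
  proof -
    have "f v / g v \<le> c" unfolding c_def using that by (intro Max_ge) auto
    then show ?thesis using assms(1)[OF that] by (simp add: pos_divide_le_eq)
  qed
qed

theorem theorem1:
  fixes n :: nat and M :: "nat \<Rightarrow> nat \<Rightarrow> enat"
  assumes "coxeter_graph n M" and "artin_spherical n M"
  shows "limsup (\<lambda>k. ereal (root k (real (artin_count n M k)))) < (4::ereal)"
proof -
  obtain cls loc :: "nat \<Rightarrow> nat" and w :: "nat \<Rightarrow> real" where weights:
    "\<And>v b. v < n \<Longrightarrow> b < n \<Longrightarrow> cls b \<noteq> cls v \<Longrightarrow> M v b = 2"
    "\<And>v. v < n \<Longrightarrow> loc v < n" "\<And>v. v < n \<Longrightarrow> 0 < w v"
    "\<And>v. v < n \<Longrightarrow> (\<Sum>b | b < n \<and> cls b = cls v \<and> (loc v \<le> loc b \<or> M v b \<noteq> 2). w b) < 4 * w v"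
    by (rule spherical_local_weights[OF assms]) (assumption | rule that)+
  let ?rk = "\<lambda>v. cls v * n + loc v"
  obtain W :: "nat \<Rightarrow> real" where W_pos: "\<And>v. v < n \<Longrightarrow> 0 < W v"
    and W_sub: "\<And>v. v < n \<Longrightarrow> (\<Sum>b | b < n \<and> rank_ordered ?rk M v b. W b) < 4 * W v"
    by (rule glue_subcritical_weights[OF weights]) (assumption | rule that)+
  obtain c :: real where c: "0 < c" "c < 4"
    and ratio: "\<And>v. v < n \<Longrightarrow> (\<Sum>b | b < n \<and> rank_ordered ?rk M v b. W b) \<le> c * W v"
    by (rule uniform_ratio_below[OF W_pos W_sub zero_less_numeral]) (assumption | rule that)+
  obtain K :: real where "0 < K" and count: "\<And>k. 0 < k \<Longrightarrow>
      card {w. set w \<subseteq> {..<n} \<and> length w = k \<and> successively (rank_ordered ?rk M) w} \<le> K * c ^ k"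
    by (rule card_successively_le_geometric[OF W_pos ratio c(1)]) (assumption | rule that)+
  have "real (artin_count n M k) \<le> K * c ^ k" if "0 < k" for k
    using artin_count_le_rank_ordered[of n M k ?rk] count[OF that] by (meson of_nat_le_iff order_trans)
  then have "limsup (\<lambda>k. ereal (root k (real (artin_count n M k)))) < ereal 4"
    using \<open>0 < K\<close> c by (rule limsup_root_less_of_le_geometric)
  then show ?thesis by simp
qed

end
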